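(* Fix $n$, and let $\mathcal C_0,\mathcal C_1,\dots,\mathcal C_k$ be subsets of $\{1,\dots,2n\}$ such that each $\mathcal C_i$ is a union of chains $C(u)$ ($u$ odd) and every chain $C(u)$ with $u$ odd in $\{1,\dots,2n\}$ lies in exactly one $\mathcal C_i$. Then $$\prod_{i=1}^k f^*(\mathcal C_i)\le f(n)\le 2^{|\mathcal C_0|}\prod_{i=1}^k f(\mathcal C_i).$$
   Context: A set of positive integers is primitive if no element divides another. For odd $u\le 2n$, $C(u)=\{u,2u,4u,\dots\}\cap\{1,\dots,2n\}$. $f(n)$ is the number of $n$-element primitive subsets of $\{1,\dots,2n\}$. For $X\subseteq\{1,\dots,2n\}$, $f(X)$ is the number of maximum-size primitive subsets of $X$, and $f^*(X)$ is the number of maximum-size primitive subsets $A\subseteq X$ such that every multiple in $\{1,\dots,2n\}$ of every element of $A$ belongs to $X$. *)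

theory Defs
  imports Main
begin

definition primitive :: "nat set \<Rightarrow> bool" where
  "primitive A \<longleftrightarrow> (\<forall>a\<in>A. \<forall>b\<in>A. a dvd b \<longrightarrow> a = b)"

definition chainC :: "nat \<Rightarrow> nat \<Rightarrow> nat set" where
  "chainC n u = {m \<in> {1..2*n}. \<exists>j::nat. m = u * 2^j}"

definition fn :: "nat \<Rightarrow> nat" where
  "fn n = card {A. A \<subseteq> {1..2*n} \<and> primitive A \<and> card A = n}"

definition max_prim :: "nat set \<Rightarrow> nat set \<Rightarrow> bool" where
  "max_prim X A \<longleftrightarrow> A \<subseteq> X \<and> primitive A \<and>
     (\<forall>B. B \<subseteq> X \<and> primitive B \<longrightarrow> card B \<le> card A)"

definition fX :: "nat set \<Rightarrow> nat" where
  "fX X = card {A. max_prim X A}"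

definition fstar :: "nat \<Rightarrow> nat set \<Rightarrow> nat" where
  "fstar n X = card {A. max_prim X A \<and>
     (\<forall>a\<in>A. \<forall>m\<in>{1..2*n}. a dvd m \<longrightarrow> m \<in> X)}"

end

theory Submission
  imports Defs "HOL-Library.FuncSet"
begin

text \<open>Every m \<in> {1..2n} is u * 2^j with u = odd part of m, and the chain C(u) is exactly the set
  of numbers with odd part u. Numbers with equal odd parts divide one another, so a primitive set
  meets each chain at most once, while {n+1..2n} is primitive and meets every chain exactly once.
  Hence a union X of chains has maximum primitive subsets of size |X \<inter> {n+1..2n}|, and these sizes
  add up to n over a partition into unions of chains. So an n-element primitive set A meets every
  part in a maximum primitive subset, and A \<mapsto> (A \<inter> C_0, (A \<inter> C_i)_i) is injective, giving the
  upper bound. Conversely, choosing in each C_i (i \<ge> 1) a maximum primitive subset that contains all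
  multiples of its elements, and C_0 \<inter> {n+1..2n} in C_0, the union is primitive: a multiple of
  an element of C_i stays in C_i, and an element above n has no other multiple up to 2n.\<close>

function odd_part :: "nat \<Rightarrow> nat" where
  "odd_part m = (if m = 0 \<or> odd m then m else odd_part (m div 2))"
  by auto
termination by (relation "measure id") auto

declare odd_part.simps [simp del]

lemma odd_part_odd [simp]: "odd u \<Longrightarrow> odd_part u = u"
  by (simp add: odd_part.simps)

lemma odd_part_double [simp]: "odd_part (2 * m) = odd_part m"
  by (cases "m = 0") (simp_all add: odd_part.simps[of "2 * m"])

lemma odd_part_mult_pow2 [simp]: "odd_part (m * 2 ^ j) = odd_part m"
proof (induction j)
  case (Suc j)
  then show ?case using odd_part_double[of "m * 2 ^ j"] by (simp add: ac_simps)
qed simp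

lemma odd_part_decomp: "\<exists>j. m = odd_part m * 2 ^ j"
proof (induction m rule: odd_part.induct)
  case (1 m)
  show ?case
  proof (cases "m = 0 \<or> odd m")
    case True
    then have "m = odd_part m * 2 ^ 0" by (simp add: odd_part.simps[of m])
    then show ?thesis ..
  next
    case False
    then obtain j where "m div 2 = odd_part (m div 2) * 2 ^ j" using 1 by blast
    then have "m = odd_part m * 2 ^ Suc j"
      using False by (simp add: odd_part.simps[of m]) (metis dvd_mult_div_cancel mult.assoc mult.commute)
    then show ?thesis ..
  qed
qed

lemma odd_odd_part: "m > 0 \<Longrightarrow> odd (odd_part m)"
proof (induction m rule: odd_part.induct)
  case (1 m)
  then show ?case
    by (cases "odd m") (auto simp: odd_part.simps[of m] elim!: evenE)
qed

lemma odd_part_le: "odd_part m \<le> m"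
proof -
  obtain j where "m = odd_part m * 2 ^ j" using odd_part_decomp by blast
  moreover have "odd_part m * 1 \<le> odd_part m * 2 ^ j" by (intro mult_le_mono2) simp
  ultimately show ?thesis by simp
qed

lemma dvd_or_dvd_if_odd_part_eq:
  assumes "odd_part a = odd_part b"
  shows "a dvd b \<or> b dvd a"
proof -
  obtain i j where a: "a = odd_part a * 2 ^ i" and b: "b = odd_part b * 2 ^ j"
    using odd_part_decomp by blast
  have "(2::nat) ^ i dvd 2 ^ j \<or> (2::nat) ^ j dvd 2 ^ i"
    by (metis le_imp_power_dvd nat_le_linear)
  then show ?thesis
    using a b assms by (metis mult_dvd_mono dvd_refl)
qed

lemma inj_on_odd_part_if_primitive: "primitive A \<Longrightarrow> inj_on odd_part A"
  unfolding inj_on_def primitive_def by (metis dvd_or_dvd_if_odd_part_eq)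

lemma chainC_eq_odd_part: "odd u \<Longrightarrow> chainC n u = {m \<in> {1..2*n}. odd_part m = u}"
  unfolding chainC_def by (metis odd_part_decomp odd_part_mult_pow2 odd_part_odd)

lemma primitive_upper_half: "primitive {n+1..2*n}"
  unfolding primitive_def
proof (intro ballI impI)
  fix a b assume ab: "a \<in> {n+1..2*n}" "b \<in> {n+1..2*n}" "a dvd b"
  then obtain c where c: "b = a * c" by blast
  have "c \<noteq> 0" using ab c by (cases "c = 0") auto
  moreover have "\<not> c \<ge> 2"
  proof
    assume "c \<ge> 2"
    then have "2 * a \<le> b" using c by simp
    with ab show False by simp
  qed
  ultimately show "a = b" using c by (cases c) auto
qed

lemma ex_mult_pow2_in_upper_half:
  fixes m n :: nat
  shows "m \<in> {1..2*n} \<Longrightarrow> \<exists>j. m * 2 ^ j \<in> {n+1..2*n}"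
proof (induction "2 * n - m" arbitrary: m rule: less_induct)
  case less
  show ?case
  proof (cases "m > n")
    case True
    then show ?thesis using less.prems by (auto intro: exI[of _ 0])
  next
    case False
    with less.prems have "2 * m \<in> {1..2*n}" "2 * n - 2 * m < 2 * n - m" by auto
    then obtain j where "2 * m * 2 ^ j \<in> {n+1..2*n}" using less.hyps by blast
    then have "m * 2 ^ Suc j \<in> {n+1..2*n}" by (simp add: ac_simps)
    then show ?thesis ..
  qed
qed

definition chain_closed :: "nat \<Rightarrow> nat set \<Rightarrow> bool" where
  "chain_closed n X \<longleftrightarrow> X \<subseteq> {1..2*n} \<and>
     (\<forall>m\<in>X. \<forall>m'\<in>{1..2*n}. odd_part m' = odd_part m \<longrightarrow> m' \<in> X)"

lemma chain_closed_Union_chainC: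
  assumes "\<forall>u\<in>U. odd u"
  shows "chain_closed n (\<Union> (chainC n ` U))"
  unfolding chain_closed_def
proof (intro conjI ballI impI)
  show "\<Union> (chainC n ` U) \<subseteq> {1..2*n}" unfolding chainC_def by blast
  fix m m' assume m: "m \<in> \<Union> (chainC n ` U)" and m': "m' \<in> {1..2*n}" "odd_part m' = odd_part m"
  then obtain u where "u \<in> U" "m \<in> chainC n u" by blast
  with assms m' have "m' \<in> chainC n u" by (simp add: chainC_eq_odd_part)
  with \<open>u \<in> U\<close> show "m' \<in> \<Union> (chainC n ` U)" by blast
qed

lemma chainC_subset_if_chain_closed:
  assumes "chain_closed n X" "m \<in> X"
  shows "chainC n (odd_part m) \<subseteq> X"
proof -
  have "m \<in> {1..2*n}" using assms unfolding chain_closed_def by auto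
  then have "odd (odd_part m)" using odd_odd_part by simp
  then show ?thesis using assms unfolding chain_closed_def by (auto simp: chainC_eq_odd_part)
qed

lemma card_primitive_le_upper_half:
  assumes X: "chain_closed n X" and B: "B \<subseteq> X" "primitive B"
  shows "card B \<le> card (X \<inter> {n+1..2*n})"
proof -
  have "odd_part ` B \<subseteq> odd_part ` (X \<inter> {n+1..2*n})"
  proof (rule image_subsetI)
    fix b assume "b \<in> B"
    then have b: "b \<in> X" "b \<in> {1..2*n}" using B X unfolding chain_closed_def by auto
    then obtain j where j: "b * 2 ^ j \<in> {n+1..2*n}" using ex_mult_pow2_in_upper_half by blast
    then have "b * 2 ^ j \<in> X" using X b unfolding chain_closed_def by auto
    with j show "odd_part b \<in> odd_part ` (X \<inter> {n+1..2*n})"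
      by (metis IntI image_eqI odd_part_mult_pow2)
  qed
  then have "card (odd_part ` B) \<le> card (odd_part ` (X \<inter> {n+1..2*n}))"
    by (intro card_mono) auto
  also have "\<dots> \<le> card (X \<inter> {n+1..2*n})" by (intro card_image_le) auto
  finally show ?thesis using card_image[OF inj_on_odd_part_if_primitive[OF B(2)]] by simp
qed

lemma max_prim_chain_closed_iff:
  assumes "chain_closed n X"
  shows "max_prim X B \<longleftrightarrow> B \<subseteq> X \<and> primitive B \<and> card B = card (X \<inter> {n+1..2*n})"
proof -
  have "primitive (X \<inter> {n+1..2*n})"
    using primitive_upper_half unfolding primitive_def by blast
  then show ?thesis
    using card_primitive_le_upper_half[OF assms] unfolding max_prim_def
    by (metis inf_le1 le_antisym)
qed

locale chain_partition =
  fixes n k :: nat and C :: "nat \<Rightarrow> nat set"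
  assumes chain_closed_part: "i \<le> k \<Longrightarrow> chain_closed n (C i)"
    and disjoint_parts: "i \<le> k \<Longrightarrow> j \<le> k \<Longrightarrow> m \<in> C i \<Longrightarrow> m \<in> C j \<Longrightarrow> i = j"
    and Union_parts: "(\<Union>i\<le>k. C i) = {1..2*n}"
begin

lemma finite_part: "i \<le> k \<Longrightarrow> finite (C i)"
  using chain_closed_part unfolding chain_closed_def by (meson finite_atLeastAtMost finite_subset)

lemma Union_Int_part:
  assumes "\<And>i. i \<le> k \<Longrightarrow> F i \<subseteq> C i" "j \<le> k"
  shows "(\<Union>i\<le>k. F i) \<inter> C j = F j"
  using assms disjoint_parts by blast

lemma card_Union_subsets_of_parts:
  assumes "\<And>i. i \<le> k \<Longrightarrow> F i \<subseteq> C i"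
  shows "card (\<Union>i\<le>k. F i) = (\<Sum>i\<le>k. card (F i))"
proof (rule card_UN_disjoint)
  show "\<forall>i\<in>{..k}. finite (F i)" using assms finite_part finite_subset by blast
  show "\<forall>i\<in>{..k}. \<forall>j\<in>{..k}. i \<noteq> j \<longrightarrow> F i \<inter> F j = {}"
    using assms disjoint_parts by blast
qed simp

lemma sum_card_upper_half: "(\<Sum>i\<le>k. card (C i \<inter> {n+1..2*n})) = n"
proof -
  have "(\<Union>i\<le>k. C i \<inter> {n+1..2*n}) = {n+1..2*n}" using Union_parts by auto
  then show ?thesis using card_Union_subsets_of_parts[of "\<lambda>i. C i \<inter> {n+1..2*n}"] by simp
qed

lemma max_prim_Int_part:
  assumes A: "A \<subseteq> {1..2*n}" "primitive A" "card A = n" and i: "i \<le> k"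
  shows "max_prim (C i) (A \<inter> C i)"
proof -
  have prim: "primitive (A \<inter> C j)" for j
    using A(2) unfolding primitive_def by blast
  have le: "card (A \<inter> C j) \<le> card (C j \<inter> {n+1..2*n})" if "j \<in> {..k}" for j
    using card_primitive_le_upper_half[OF chain_closed_part[of j] _ prim[of j]] that by auto
  have "A = (\<Union>j\<le>k. A \<inter> C j)" using A(1) Union_parts by auto
  then have "(\<Sum>j\<le>k. card (A \<inter> C j)) = (\<Sum>j\<le>k. card (C j \<inter> {n+1..2*n}))"
    using card_Union_subsets_of_parts[of "\<lambda>j. A \<inter> C j"] A(3) sum_card_upper_half by simp
  then have "card (A \<inter> C i) = card (C i \<inter> {n+1..2*n})"
    by (rule sum_mono_inv) (use le i in auto)
  then show ?thesis
    using prim max_prim_chain_closed_iff[OF chain_closed_part[OF i]] by simp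
qed

lemma primitive_Union_of_parts:
  assumes sub: "\<And>i. i \<le> k \<Longrightarrow> F i \<subseteq> C i" and prim: "\<And>i. i \<le> k \<Longrightarrow> primitive (F i)"
    and upper: "F 0 \<subseteq> {n+1..2*n}"
    and up_closed: "\<And>i a m. i \<in> {1..k} \<Longrightarrow> a \<in> F i \<Longrightarrow> m \<in> {1..2*n} \<Longrightarrow> a dvd m \<Longrightarrow> m \<in> C i"
  shows "primitive (\<Union>i\<le>k. F i)"
  unfolding primitive_def
proof (intro ballI impI)
  fix a b assume a: "a \<in> (\<Union>i\<le>k. F i)" and b: "b \<in> (\<Union>i\<le>k. F i)" and dvd: "a dvd b"
  obtain i where i: "i \<le> k" "a \<in> F i" using a by blast
  have b_range: "b \<in> {1..2*n}" using b sub chain_closed_part unfolding chain_closed_def by blast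
  show "a = b"
  proof (cases "i = 0")
    case True
    then have "a \<in> {n+1..2*n}" using i upper by blast
    moreover have "a \<le> b" using dvd b_range by (intro dvd_imp_le) auto
    ultimately have "b \<in> {n+1..2*n}" using b_range by auto
    with \<open>a \<in> {n+1..2*n}\<close> show ?thesis
      using primitive_upper_half[of n] dvd unfolding primitive_def by blast
  next
    case False
    then have "b \<in> C i" using i up_closed b_range dvd by auto
    then have "b \<in> F i" using b i sub Union_Int_part by blast
    then show ?thesis using prim i dvd unfolding primitive_def by blast
  qed
qed

lemma finite_max_prim: "finite X \<Longrightarrow> finite {B. max_prim X B}"
  unfolding max_prim_def by (rule finite_subset[of _ "Pow X"]) auto

lemma fn_le_pow2_times_prod_fX: "fn n \<le> 2 ^ card (C 0) * (\<Prod>i=1..k. fX (C i))"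
proof -
  define P where "P = {A. A \<subseteq> {1..2*n} \<and> primitive A \<and> card A = n}"
  define S where "S = Pow (C 0) \<times> (\<Pi>\<^sub>E i\<in>{1..k}. {B. max_prim (C i) B})"
  define restr where "restr A = (A \<inter> C 0, \<lambda>i\<in>{1..k}. A \<inter> C i)" for A
  have "restr ` P \<subseteq> S"
    using max_prim_Int_part unfolding P_def S_def restr_def by auto
  moreover have "inj_on restr P"
  proof (rule inj_onI)
    fix A A' assume A: "A \<in> P" "A' \<in> P" and eq: "restr A = restr A'"
    have "A \<inter> C i = A' \<inter> C i" if "i \<le> k" for i
    proof (cases "i = 0")
      case False
      with that have "i \<in> {1..k}" by simp
      then show ?thesis using fun_cong[OF arg_cong[OF eq, of snd], of i] by (simp add: restr_def)
    qed (use eq restr_def in simp)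
    then show "A = A'" using A Union_parts unfolding P_def by blast
  qed
  moreover have "finite S"
    unfolding S_def using finite_part finite_max_prim by (auto intro!: finite_PiE)
  ultimately have "card P \<le> card S" by (intro card_inj_on_le)
  also have "card S = 2 ^ card (C 0) * (\<Prod>i=1..k. fX (C i))"
    using finite_part[of 0] by (simp add: S_def fX_def card_cartesian_product card_PiE card_Pow)
  finally show ?thesis unfolding fn_def P_def .
qed

lemma prod_fstar_le_fn: "(\<Prod>i=1..k. fstar n (C i)) \<le> fn n"
proof -
  define P where "P = {A. A \<subseteq> {1..2*n} \<and> primitive A \<and> card A = n}"
  define Q where "Q i = {B. max_prim (C i) B \<and> (\<forall>a\<in>B. \<forall>m\<in>{1..2*n}. a dvd m \<longrightarrow> m \<in> C i)}" for i
  define G where "G g i = (if i = 0 then C 0 \<inter> {n+1..2*n} else g i)" for g :: "nat \<Rightarrow> nat set" and i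
  define glue where "glue g = (\<Union>i\<le>k. G g i)" for g
  have max_G: "max_prim (C i) (G g i)" if g: "g \<in> (\<Pi>\<^sub>E i\<in>{1..k}. Q i)" and i: "i \<le> k" for g i
  proof (cases "i = 0")
    case True
    have "primitive (C 0 \<inter> {n+1..2*n})"
      using primitive_upper_half unfolding primitive_def by blast
    then show ?thesis
      using True max_prim_chain_closed_iff[OF chain_closed_part[OF i]] by (simp add: G_def)
  next
    case False
    then show ?thesis using g i by (auto simp: G_def Q_def)
  qed
  have G_sub: "G g i \<subseteq> C i" if "g \<in> (\<Pi>\<^sub>E i\<in>{1..k}. Q i)" "i \<le> k" for g i
    using max_G[OF that] unfolding max_prim_def by blast
  have glue_Int: "glue g \<inter> C i = g i" if g: "g \<in> (\<Pi>\<^sub>E i\<in>{1..k}. Q i)" and i: "i \<in> {1..k}" for g i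
    using Union_Int_part[OF G_sub[OF g], of i] i by (simp add: glue_def G_def)
  have "glue ` (\<Pi>\<^sub>E i\<in>{1..k}. Q i) \<subseteq> P"
  proof (rule image_subsetI)
    fix g assume g: "g \<in> (\<Pi>\<^sub>E i\<in>{1..k}. Q i)"
    have "glue g \<subseteq> {1..2*n}"
      using G_sub[OF g] chain_closed_part unfolding glue_def chain_closed_def by blast
    moreover have "card (glue g) = n"
    proof -
      have "card (glue g) = (\<Sum>i\<le>k. card (G g i))"
        unfolding glue_def using card_Union_subsets_of_parts G_sub[OF g] by blast
      also have "\<dots> = (\<Sum>i\<le>k. card (C i \<inter> {n+1..2*n}))"
        using max_G[OF g] max_prim_chain_closed_iff[OF chain_closed_part] by (intro sum.cong) auto
      finally show ?thesis using sum_card_upper_half by simp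
    qed
    moreover have "primitive (glue g)"
      unfolding glue_def
    proof (rule primitive_Union_of_parts)
      show "G g i \<subseteq> C i" "primitive (G g i)" if "i \<le> k" for i
        using max_G[OF g that] unfolding max_prim_def by auto
      show "G g 0 \<subseteq> {n+1..2*n}" by (simp add: G_def)
      show "m \<in> C i" if "i \<in> {1..k}" "a \<in> G g i" "m \<in> {1..2*n}" "a dvd m" for i a m
      proof -
        have "g i \<in> Q i" using g that(1) by blast
        then show ?thesis using that unfolding Q_def G_def by auto
      qed
    qed
    ultimately show "glue g \<in> P" unfolding P_def by blast
  qed
  moreover have "inj_on glue (\<Pi>\<^sub>E i\<in>{1..k}. Q i)"
    using glue_Int by (intro inj_onI) (metis PiE_ext)
  moreover have "finite P" unfolding P_def by (rule finite_subset[of _ "Pow {1..2*n}"]) auto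
  ultimately have "card (\<Pi>\<^sub>E i\<in>{1..k}. Q i) \<le> card P" by (intro card_inj_on_le)
  then show ?thesis by (simp add: card_PiE fstar_def Q_def fn_def P_def)
qed

end

lemma chain_partition_of_chains:
  assumes unions: "\<forall>i\<le>k. \<exists>U. U \<subseteq> {u. odd u \<and> u \<le> 2*n} \<and> C i = \<Union> (chainC n ` U)"
    and exact: "\<forall>u. odd u \<and> u \<le> 2*n \<longrightarrow> (\<exists>!i. i \<le> k \<and> chainC n u \<subseteq> C i)"
  shows "chain_partition n k C"
proof
  show closed: "chain_closed n (C i)" if "i \<le> k" for i
    using unions that chain_closed_Union_chainC by (metis (no_types, lifting) mem_Collect_eq subsetD)
  have odd_part_range: "odd (odd_part m) \<and> odd_part m \<le> 2*n" if "m \<in> {1..2*n}" for m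
    using odd_odd_part[of m] odd_part_le[of m] that by auto
  show "i = j" if "i \<le> k" "j \<le> k" "m \<in> C i" "m \<in> C j" for i j m
  proof -
    have "m \<in> {1..2*n}" using closed[OF that(1)] that(3) unfolding chain_closed_def by blast
    moreover have "chainC n (odd_part m) \<subseteq> C i" "chainC n (odd_part m) \<subseteq> C j"
      using chainC_subset_if_chain_closed closed that by auto
    ultimately show ?thesis using exact odd_part_range that(1,2) by blast
  qed
  show "(\<Union>i\<le>k. C i) = {1..2*n}"
  proof
    show "(\<Union>i\<le>k. C i) \<subseteq> {1..2*n}" using closed unfolding chain_closed_def by blast
    show "{1..2*n} \<subseteq> (\<Union>i\<le>k. C i)"
    proof
      fix m assume m: "m \<in> {1..2*n}"
      then obtain i where "i \<le> k" "chainC n (odd_part m) \<subseteq> C i"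
        using exact odd_part_range by blast
      moreover have "m \<in> chainC n (odd_part m)"
        using m odd_part_range[OF m] by (simp add: chainC_eq_odd_part)
      ultimately show "m \<in> (\<Union>i\<le>k. C i)" by blast
    qed
  qed
qed

theorem mainTheorem9:
  fixes n k :: nat and C :: "nat \<Rightarrow> nat set"
  assumes sub: "\<forall>i\<le>k. C i \<subseteq> {1..2*n}"
    and unions: "\<forall>i\<le>k. \<exists>U. U \<subseteq> {u. odd u \<and> u \<le> 2*n} \<and> C i = \<Union> (chainC n ` U)"
    and exact: "\<forall>u. odd u \<and> u \<le> 2*n \<longrightarrow> (\<exists>!i. i \<le> k \<and> chainC n u \<subseteq> C i)"
  shows "(\<Prod>i=1..k. fstar n (C i)) \<le> fn n \<and>
         fn n \<le> 2 ^ card (C 0) * (\<Prod>i=1..k. fX (C i))"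
proof -
  interpret chain_partition n k C
    using chain_partition_of_chains[OF unions exact] .
  show ?thesis using prod_fstar_le_fn fn_le_pow2_times_prod_fX by blast
qed

end
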